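(* Let $\tau\ge1$ and consider two candidates $P,Q$. Weighted Majority Rule 1 (defined in the context) has distortion at most $\max\big\{\frac{\tau+2}{\tau},\frac{3\tau-1}{\tau+1}\big\}$; i.e., for every instance, if it selects $P$ then $SC(P)\le\max\{\frac{\tau+2}{\tau},\frac{3\tau-1}{\tau+1}\}\,SC(Q)$.
   Context: Voters $N=\{1,\dots,n\}$ and candidates are points of an arbitrary metric space $(X,d)$. Voter $i$ prefers $P$ to $Q$ only if $d(i,P)\le d(i,Q)$, with preference strength $\alpha_i^{PQ}=d(i,Q)/d(i,P)\ge1$. $SC(Y)=\sum_{i\in N}d(i,Y)$. For two candidates $P,Q$ and a threshold $\tau$, the information available is every voter's preferred candidate and whether that voter's preference strength is $>\tau$ (strong) or $\le\tau$ (weak). Let $A_2$ ($A_1$) be the voters preferring $P$ with strength $>\tau$ ($\le\tau$), and $B_2$ ($B_1$) the voters preferring $Q$ with strength $>\tau$ ($\le\tau$). Weighted Majority Rule 1: if $\tau\ge\sqrt2+1$, give weight $\frac{\tau+1}{\tau-1}$ to each strong voter and weight $1$ to each weak voter; if $\tau<\sqrt2+1$, give weight $\tau$ to each strong voter and weight $1$ to each weak voter. Select $P$ if the total weight of voters preferring $P$ is at least that of voters preferring $Q$ (i.e. $w|A_2|+|A_1|\ge |B_1|+w|B_2|$ for the appropriate strong weight $w$), and $Q$ otherwise (ties may be broken arbitrarily). *)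

theory Defs
  imports "HOL-Analysis.Analysis" "HOL-Library.Extended_Real"
begin

text \<open>Preference strength of a voter located at x for P over Q: d(x,Q)/d(x,P),
  with the conventions c/0 = infinity for c > 0 and 0/0 = 1 (indifference).\<close>
definition strength :: "('a \<Rightarrow> 'a \<Rightarrow> real) \<Rightarrow> 'a \<Rightarrow> 'a \<Rightarrow> 'a \<Rightarrow> ereal" where
  "strength d x P Q =
     (if d x P = 0 then (if d x Q = 0 then 1 else \<infinity>) else ereal (d x Q / d x P))"

definition SC :: "('a \<Rightarrow> 'a \<Rightarrow> real) \<Rightarrow> 'i set \<Rightarrow> ('i \<Rightarrow> 'a) \<Rightarrow> 'a \<Rightarrow> real" where
  "SC d N v Y = (\<Sum>i\<in>N. d (v i) Y)"

definition wmr1_weight :: "real \<Rightarrow> real" where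
  "wmr1_weight \<tau> = (if \<tau> \<ge> sqrt 2 + 1 then (\<tau> + 1) / (\<tau> - 1) else \<tau>)"

definition A2 where "A2 d N v prefP \<tau> P Q = {i\<in>N. prefP i \<and> strength d (v i) P Q > ereal \<tau>}"
definition A1 where "A1 d N v prefP \<tau> P Q = {i\<in>N. prefP i \<and> strength d (v i) P Q \<le> ereal \<tau>}"
definition B2 where "B2 d N v prefP \<tau> P Q = {i\<in>N. \<not> prefP i \<and> strength d (v i) Q P > ereal \<tau>}"
definition B1 where "B1 d N v prefP \<tau> P Q = {i\<in>N. \<not> prefP i \<and> strength d (v i) Q P \<le> ereal \<tau>}"

text \<open>Weighted Majority Rule 1 (may) select P: weight of P-supporters is at least that of Q-supporters.\<close>
definition wmr1_selects_P ::
  "('a \<Rightarrow> 'a \<Rightarrow> real) \<Rightarrow> 'i set \<Rightarrow> ('i \<Rightarrow> 'a) \<Rightarrow> ('i \<Rightarrow> bool) \<Rightarrow> real \<Rightarrow> 'a \<Rightarrow> 'a \<Rightarrow> bool" where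
  "wmr1_selects_P d N v prefP \<tau> P Q \<longleftrightarrow>
     wmr1_weight \<tau> * real (card (A2 d N v prefP \<tau> P Q)) + real (card (A1 d N v prefP \<tau> P Q))
     \<ge> real (card (B1 d N v prefP \<tau> P Q)) + wmr1_weight \<tau> * real (card (B2 d N v prefP \<tau> P Q))"

end

theory Submission imports Defs begin

text \<open>Write \<open>c\<close> for the distortion bound, \<open>w\<close> for the weight of a strong voter and \<open>D = d(P,Q)\<close>.
  Every voter \<open>i\<close> satisfies \<open>d(i,P) - c d(i,Q) \<le> (D / w) s\<^sub>i\<close>, where \<open>s\<^sub>i\<close> is \<open>i\<close>'s vote
  counted negatively for \<open>P\<close> and positively for \<open>Q\<close>; this uses only the triangle inequality and
  the information whether \<open>i\<close>'s preference is strong. Summing over all voters,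
  \<open>SC(P) - c SC(Q) \<le> (D / w) \<Sum>\<^sub>i s\<^sub>i\<close>, and \<open>\<Sum>\<^sub>i s\<^sub>i \<le> 0\<close> is precisely the
  condition under which the rule selects \<open>P\<close>.\<close>

definition wmr1_distortion :: "real \<Rightarrow> real" where
  "wmr1_distortion \<tau> = max ((\<tau> + 2) / \<tau>) ((3 * \<tau> - 1) / (\<tau> + 1))"

definition wmr1_signed_vote ::
  "('a \<Rightarrow> 'a \<Rightarrow> real) \<Rightarrow> 'a \<Rightarrow> bool \<Rightarrow> real \<Rightarrow> 'a \<Rightarrow> 'a \<Rightarrow> real" where
  "wmr1_signed_vote d x prefers_P \<tau> P Q =
     (if prefers_P then - (if strength d x P Q > ereal \<tau> then wmr1_weight \<tau> else 1)
      else (if strength d x Q P > ereal \<tau> then wmr1_weight \<tau> else 1))"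

lemma strength_gt_imp_mult_le:
  assumes "strength d x P Q > ereal t" "0 \<le> d x P" "0 \<le> d x Q"
  shows "t * d x P \<le> d x Q"
proof (cases "d x P = 0")
  case False
  hence "t < d x Q / d x P" using assms(1) by (simp add: strength_def)
  thus ?thesis using False assms(2) by (simp add: field_simps)
qed (use assms in simp)

lemma strength_le_imp_le_mult:
  assumes "strength d x Q P \<le> ereal t" "0 \<le> d x P" "0 \<le> d x Q"
  shows "d x P \<le> t * d x Q"
proof (cases "d x Q = 0")
  case False
  hence "d x P / d x Q \<le> t" using assms(1) by (simp add: strength_def)
  thus ?thesis using False assms(3) by (simp add: field_simps)
qed (use assms in \<open>auto simp: strength_def split: if_splits\<close>)

lemma one_less_sqrt_2: "1 < sqrt (2 :: real)"
  by simp

lemma wmr1_weight_pos: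
  assumes "1 \<le> \<tau>"
  shows "0 < wmr1_weight \<tau>"
proof (cases "\<tau> \<ge> sqrt 2 + 1")
  case True
  hence "1 < \<tau>" using one_less_sqrt_2 by linarith
  thus ?thesis using True by (simp add: wmr1_weight_def)
qed (use assms in \<open>simp add: wmr1_weight_def\<close>)

lemma wmr1_distortion_mult_ge: "0 < \<tau> \<Longrightarrow> \<tau> + 2 \<le> wmr1_distortion \<tau> * \<tau>"
  unfolding wmr1_distortion_def by (simp add: mult.commute max_def field_simps)

lemma wmr1_distortion_ge_1: "0 < \<tau> \<Longrightarrow> 1 \<le> wmr1_distortion \<tau>"
proof -
  assume "0 < \<tau>"
  hence "1 \<le> (\<tau> + 2) / \<tau>" by simp
  thus ?thesis by (simp add: wmr1_distortion_def le_max_iff_disj)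
qed

lemma wmr1_distortion_ge_weak_P:
  assumes "1 \<le> \<tau>"
  shows "1 + 2 / wmr1_weight \<tau> \<le> wmr1_distortion \<tau>"
proof (cases "\<tau> \<ge> sqrt 2 + 1")
  case True
  hence "1 < \<tau>" using one_less_sqrt_2 by linarith
  hence "1 + 2 / wmr1_weight \<tau> = (3 * \<tau> - 1) / (\<tau> + 1)"
    using True by (simp add: wmr1_weight_def field_simps)
  thus ?thesis by (simp add: wmr1_distortion_def)
next
  case False
  hence "1 + 2 / wmr1_weight \<tau> = (\<tau> + 2) / \<tau>"
    using assms by (simp add: wmr1_weight_def field_simps)
  thus ?thesis by (simp add: wmr1_distortion_def)
qed

lemma wmr1_distortion_ge_weak_Q:
  assumes "1 \<le> \<tau>"
  shows "(\<tau> - wmr1_distortion \<tau>) * wmr1_weight \<tau> \<le> \<tau> - 1"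
proof (cases "\<tau> \<ge> sqrt 2 + 1")
  case True
  hence "1 < \<tau>" using one_less_sqrt_2 by linarith
  have "(3 * \<tau> - 1) / (\<tau> + 1) \<le> wmr1_distortion \<tau>"
    by (simp add: wmr1_distortion_def)
  hence "3 * \<tau> - 1 \<le> wmr1_distortion \<tau> * (\<tau> + 1)"
    using assms by (simp add: pos_divide_le_eq)
  hence "(\<tau> - wmr1_distortion \<tau>) * (\<tau> + 1) \<le> (\<tau> - 1) * (\<tau> - 1)"
    by (simp add: algebra_simps)
  thus ?thesis using True \<open>1 < \<tau>\<close> by (simp add: wmr1_weight_def field_simps)
next
  case False
  \<comment> \<open>below the threshold \<open>\<tau>\<^sup>2 - 2\<tau> - 1 < 0\<close>, i.e. \<open>(\<tau> - 1)\<^sup>2 < 2\<close>\<close>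
  hence "(\<tau> - 1)\<^sup>2 < (sqrt 2)\<^sup>2" using assms by (intro power_strict_mono) auto
  hence "(\<tau> - 1)\<^sup>2 < 2" by simp
  thus ?thesis
    using False wmr1_distortion_mult_ge[of \<tau>] assms
    by (simp add: wmr1_weight_def power2_eq_square algebra_simps)
qed

text \<open>In the four lemmas below \<open>x = d(i,P)\<close>, \<open>y = d(i,Q)\<close> and \<open>D = d(P,Q)\<close>.\<close>

lemma strong_P_supporter_bound:
  fixes x y D c t :: real
  assumes "0 \<le> x" "t * x \<le> y" "D \<le> x + y" "t + 2 \<le> c * t" "1 \<le> t"
  shows "x - c * y \<le> - D"
proof -
  have "0 \<le> y" using assms(1,2,5) by (meson order.trans mult_nonneg_nonneg zero_le_one)
  hence "(t + 2) * y \<le> (c * t) * y" using assms(4) by (simp add: mult_right_mono)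
  hence "t * (2 * x + y) \<le> t * (c * y)" using assms(2) by (simp add: algebra_simps)
  hence "2 * x + y \<le> c * y" using assms(5) by simp
  thus ?thesis using assms(3) by linarith
qed

lemma weak_P_supporter_bound:
  fixes x y D c w :: real
  assumes "x \<le> y" "0 \<le> D" "D \<le> x + y" "1 + 2 / w \<le> c" "0 < w"
  shows "x - c * y \<le> - D / w"
proof -
  have "D / 2 \<le> y" using assms(1,3) by linarith
  hence "(2 / w) * (D / 2) \<le> (c - 1) * y"
    using assms(2,4,5) by (intro mult_mono') auto
  thus ?thesis using assms(1) by (simp add: algebra_simps)
qed

lemma weak_Q_supporter_bound:
  fixes x y D c w t :: real
  assumes "x \<le> t * y" "x \<le> y + D" "0 \<le> y" "0 \<le> D" "0 < w" "1 \<le> c"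
    and "(t - c) * w \<le> t - 1"
  shows "x - c * y \<le> D / w"
proof (cases "t \<le> c")
  case True
  hence "t * y \<le> c * y" using assms(3) by (rule mult_right_mono)
  moreover have "0 \<le> D / w" using assms(4,5) by simp
  ultimately show ?thesis using assms(1) by linarith
next
  case False
  hence "1 < t" using assms(6) by linarith
  \<comment> \<open>\<open>x - c y\<close> is a combination of \<open>x - t y \<le> 0\<close> and \<open>x - y \<le> D\<close>\<close>
  have "(t - 1) * (x - c * y) = (c - 1) * (x - t * y) + (t - c) * (x - y)"
    by (simp add: algebra_simps)
  also have "\<dots> \<le> (t - c) * D"
  proof -
    have "(c - 1) * (x - t * y) \<le> 0" using assms(1,6) by (simp add: mult_nonneg_nonpos)
    moreover have "(t - c) * (x - y) \<le> (t - c) * D"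
      using assms(2) False by (intro mult_left_mono) auto
    ultimately show ?thesis by linarith
  qed
  also have "\<dots> \<le> (t - 1) * (D / w)"
  proof -
    have "(t - c) * w * D \<le> (t - 1) * D" using assms(7,4) by (rule mult_right_mono)
    thus ?thesis using assms(5) by (simp add: field_simps)
  qed
  finally show ?thesis using \<open>1 < t\<close> by (simp only: mult_le_cancel_left_pos)
qed

lemma strong_Q_supporter_bound:
  fixes x y D c :: real
  assumes "x \<le> y + D" "0 \<le> y" "1 \<le> c"
  shows "x - c * y \<le> D"
  using assms mult_right_mono[OF assms(3,2)] by simp

lemma wmr1_voter_bound:
  assumes "Metric_space M d" "x \<in> M" "P \<in> M" "Q \<in> M" "1 \<le> \<tau>"
    and "prefers_P \<Longrightarrow> d x P \<le> d x Q" "\<not> prefers_P \<Longrightarrow> d x Q \<le> d x P"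
  shows "d x P - wmr1_distortion \<tau> * d x Q
           \<le> d P Q / wmr1_weight \<tau> * wmr1_signed_vote d x prefers_P \<tau> P Q"
proof -
  interpret Metric_space M d by fact
  define c where "c = wmr1_distortion \<tau>"
  define w where "w = wmr1_weight \<tau>"
  have "0 < w" using assms(5) by (simp add: w_def wmr1_weight_pos)
  have "1 \<le> c" using assms(5) by (simp add: c_def wmr1_distortion_ge_1)
  have "0 \<le> d x P" "0 \<le> d x Q" "0 \<le> d P Q" by simp_all
  have tri_PQ: "d P Q \<le> d x P + d x Q" using triangle''[OF assms(3,2,4)] .
  have tri_Q: "d x P \<le> d x Q + d P Q" using triangle'[OF assms(2,4,3)] .
  show ?thesis
  proof (cases prefers_P)
    case True
    show ?thesis
    proof (cases "strength d x P Q > ereal \<tau>")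
      case strong: True
      have "d x P - c * d x Q \<le> - d P Q"
        using strong_P_supporter_bound strength_gt_imp_mult_le[OF strong] tri_PQ
          wmr1_distortion_mult_ge assms(5) \<open>0 \<le> d x P\<close> \<open>0 \<le> d x Q\<close>
        by (simp add: c_def)
      thus ?thesis using True strong \<open>0 < w\<close>
        by (simp add: wmr1_signed_vote_def c_def w_def)
    next
      case False
      have "d x P - c * d x Q \<le> - d P Q / w"
        using weak_P_supporter_bound assms(6)[OF True] \<open>0 \<le> d P Q\<close> tri_PQ
          wmr1_distortion_ge_weak_P[OF assms(5)] \<open>0 < w\<close>
        by (simp add: c_def w_def)
      thus ?thesis using True False by (simp add: wmr1_signed_vote_def c_def w_def)
    qed
  next
    case False
    show ?thesis
    proof (cases "strength d x Q P > ereal \<tau>")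
      case True
      have "d x P - c * d x Q \<le> d P Q"
        using strong_Q_supporter_bound[OF tri_Q \<open>0 \<le> d x Q\<close> \<open>1 \<le> c\<close>] .
      thus ?thesis using False True \<open>0 < w\<close> by (simp add: wmr1_signed_vote_def c_def w_def)
    next
      case weak: False
      hence "strength d x Q P \<le> ereal \<tau>" by (simp add: not_less)
      hence "d x P \<le> \<tau> * d x Q"
        using \<open>0 \<le> d x P\<close> \<open>0 \<le> d x Q\<close> by (rule strength_le_imp_le_mult)
      hence "d x P - c * d x Q \<le> d P Q / w"
        using weak_Q_supporter_bound tri_Q \<open>0 \<le> d x Q\<close> \<open>0 \<le> d P Q\<close> \<open>0 < w\<close> \<open>1 \<le> c\<close>
          wmr1_distortion_ge_weak_Q[OF assms(5)]
        by (simp add: c_def w_def)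
      thus ?thesis using False weak by (simp add: wmr1_signed_vote_def c_def w_def)
    qed
  qed
qed

lemma sum_wmr1_signed_vote:
  assumes "finite N"
  shows "(\<Sum>i\<in>N. wmr1_signed_vote d (v i) (prefP i) \<tau> P Q)
     = real (card (B1 d N v prefP \<tau> P Q)) + wmr1_weight \<tau> * real (card (B2 d N v prefP \<tau> P Q))
       - (wmr1_weight \<tau> * real (card (A2 d N v prefP \<tau> P Q)) + real (card (A1 d N v prefP \<tau> P Q)))"
proof -
  let ?strongP = "{i. ereal \<tau> < strength d (v i) P Q}" and ?strongQ = "{i. ereal \<tau> < strength d (v i) Q P}"
  have "N \<inter> Collect prefP \<inter> ?strongP = A2 d N v prefP \<tau> P Q"
    "N \<inter> Collect prefP \<inter> - ?strongP = A1 d N v prefP \<tau> P Q"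
    "N \<inter> - Collect prefP \<inter> ?strongQ = B2 d N v prefP \<tau> P Q"
    "N \<inter> - Collect prefP \<inter> - ?strongQ = B1 d N v prefP \<tau> P Q"
    by (auto simp: A1_def A2_def B1_def B2_def not_less)
  thus ?thesis
    using assms by (simp add: wmr1_signed_vote_def sum.If_cases sum_negf)
qed

theorem mainTheorem3:
  fixes M :: "'a set" and d :: "'a \<Rightarrow> 'a \<Rightarrow> real"
    and N :: "'i set" and v :: "'i \<Rightarrow> 'a" and prefP :: "'i \<Rightarrow> bool"
    and \<tau> :: real and P Q :: 'a
  assumes "Metric_space M d"
    and "finite N"
    and "\<forall>i\<in>N. v i \<in> M"
    and "P \<in> M" and "Q \<in> M"
    and "\<tau> \<ge> 1"
    and "\<forall>i\<in>N. prefP i \<longrightarrow> d (v i) P \<le> d (v i) Q"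
    and "\<forall>i\<in>N. \<not> prefP i \<longrightarrow> d (v i) Q \<le> d (v i) P"
    and "wmr1_selects_P d N v prefP \<tau> P Q"
  shows "SC d N v P \<le> max ((\<tau> + 2) / \<tau>) ((3 * \<tau> - 1) / (\<tau> + 1)) * SC d N v Q"
proof -
  let ?c = "wmr1_distortion \<tau>" and ?s = "\<lambda>i. wmr1_signed_vote d (v i) (prefP i) \<tau> P Q"
  have "SC d N v P - ?c * SC d N v Q = (\<Sum>i\<in>N. d (v i) P - ?c * d (v i) Q)"
    by (simp add: SC_def sum_subtractf sum_distrib_left)
  also have "\<dots> \<le> (\<Sum>i\<in>N. d P Q / wmr1_weight \<tau> * ?s i)"
    using assms(1,3-8) by (intro sum_mono wmr1_voter_bound) auto
  also have "\<dots> = d P Q / wmr1_weight \<tau> * (\<Sum>i\<in>N. ?s i)"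
    by (simp add: sum_distrib_left)
  also have "\<dots> \<le> 0"
  proof (rule mult_nonneg_nonpos)
    show "0 \<le> d P Q / wmr1_weight \<tau>"
      using assms(1,6) wmr1_weight_pos Metric_space.nonneg by fastforce
    show "(\<Sum>i\<in>N. ?s i) \<le> 0"
      using assms(9) by (simp add: sum_wmr1_signed_vote[OF assms(2)] wmr1_selects_P_def)
  qed
  finally show ?thesis by (simp add: wmr1_distortion_def)
qed

end
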